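(* Let $A$ be a popular arborescence of $G$ and let $\mathcal D=\{D_1,\dots,D_q\}$ be a chain with $\emptyset\subsetneq D_1\subsetneq\cdots\subsetneq D_q=E$, $A\subseteq E(\mathcal D)$, and $\mathrm{span}(A\cap D_i)=D_i$ for all $i$. Then at any moment of the execution of Algorithm 1 on $G$ (for any choices of the lexicographically maximal branchings), the current multichain $\mathcal C=\{C_1,\dots,C_p\}$ satisfies $p\le q$ and $D_i\subseteq C_i$ for $i=1,\dots,p$.
   Context: $G=(V\cup\{r\},E)$ is a directed graph, $r$ has no incoming edge, each $v\in V$ has a partial order $\succ_v$ on its incoming edges $\delta(v)$, $n=|V|$. An arborescence is $A\subseteq E$ with no undirected cycle and exactly one edge $A(v)\in\delta(v)$ per $v\in V$; a branching is $I\subseteq E$ with no undirected cycle and $|I\cap\delta(v)|\le1$ for all $v$. $A$ is popular if $\phi(A,A')\ge\phi(A',A)$ for all arborescences $A'$, with $\phi(A,A')$ the number of $v$ having $A(v)\succ_v A'(v)$. $\mathrm{rank}$ is the graphic matroid rank and $\mathrm{span}(S)=\{e:\mathrm{rank}(S\cup\{e\})=\mathrm{rank}(S)\}$. A multichain is an indexed family $C_1\subseteq\cdots\subseteq C_p$ of subsets of $E$ (a chain if all inclusions are strict). For a multichain with $C_p=E$ and $C_0=\emptyset$: $\mathrm{lev}_{\mathcal C}(e)$ is the index $i$ with $e\in C_i\setminus C_{i-1}$; $\mathrm{lev}^*_{\mathcal C}(v)=\max_{e\in\delta(v)}\mathrm{lev}_{\mathcal C}(e)$; $E(\mathcal C)$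 is the set of $e\in\delta(v)$ ($v\in V$) such that either (i) $\mathrm{lev}_{\mathcal C}(e)=\mathrm{lev}^*_{\mathcal C}(v)$ and no $e'\in\delta(v)$ of that level has $e'\succ_v e$, or (ii) $\mathrm{lev}_{\mathcal C}(e)=\mathrm{lev}^*_{\mathcal C}(v)-1$, no $e'\in\delta(v)$ of that level has $e'\succ_v e$, and $e\succ_v f$ for all $f\in\delta(v)$ of level $\mathrm{lev}^*_{\mathcal C}(v)$. Algorithm 1: set $p=1$, $C_1=E$. While $p\le n$: compute $E(\mathcal C)$; find a branching $I\subseteq E(\mathcal C)$ lexicographically maximizing $(|I\cap C_1|,\dots,|I\cap C_p|)$; if $|I\cap C_i|=\mathrm{rank}(C_i)$ for all $i$, return $I$; otherwise let $k$ be the minimum index with $|I\cap C_k|<\mathrm{rank}(C_k)$, set $C_k\leftarrow\mathrm{span}(I\cap C_k)$, and if $k=p$, set $p\leftarrow p+1$ and add $C_p=E$ to $\mathcal C$. If the loop ends, report that $G$ has no popular arborescence. *)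

theory Defs
  imports Main
begin

text \<open>Directed multigraph: vertex set V plus root r, edge set E (abstract edge type),
  tail function tail and head function head. pref v e f means e \<succ>_v f.\<close>

definition digraph_wf ::
  "'v set \<Rightarrow> 'v \<Rightarrow> 'e set \<Rightarrow> ('e \<Rightarrow> 'v) \<Rightarrow> ('e \<Rightarrow> 'v) \<Rightarrow> ('v \<Rightarrow> 'e \<Rightarrow> 'e \<Rightarrow> bool) \<Rightarrow> bool" where
  "digraph_wf V r E tail head pref \<longleftrightarrow>
     finite V \<and> finite E \<and> r \<notin> V \<and>
     (\<forall>e\<in>E. tail e \<in> insert r V \<and> head e \<in> V) \<and>
     (\<forall>v\<in>V. (\<forall>e\<in>E. head e = v \<longrightarrow> \<not> pref v e e) \<and>
             (\<forall>e\<in>E. \<forall>f\<in>E. \<forall>g\<in>E. head e = v \<and> head f = v \<and> head g = v \<longrightarrow>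
                  pref v e f \<longrightarrow> pref v f g \<longrightarrow> pref v e g))"

definition delta :: "'e set \<Rightarrow> ('e \<Rightarrow> 'v) \<Rightarrow> 'v \<Rightarrow> 'e set" where
  "delta E head v = {e \<in> E. head e = v}"

text \<open>Undirected cycle: distinct edges es = e_0..e_(k-1), distinct vertices vs = v_0..v_(k-1),
  k \<ge> 1, edge e_i joins v_i and v_((i+1) mod k) (k = 1: a loop).\<close>
definition undirected_cycle :: "('e \<Rightarrow> 'v) \<Rightarrow> ('e \<Rightarrow> 'v) \<Rightarrow> 'e list \<Rightarrow> 'v list \<Rightarrow> bool" where
  "undirected_cycle tail head es vs \<longleftrightarrow>
     es \<noteq> [] \<and> length vs = length es \<and> distinct es \<and> distinct vs \<and>
     (\<forall>i < length es. {tail (es ! i), head (es ! i)} = {vs ! i, vs ! ((i + 1) mod length es)})"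

definition no_cycle :: "('e \<Rightarrow> 'v) \<Rightarrow> ('e \<Rightarrow> 'v) \<Rightarrow> 'e set \<Rightarrow> bool" where
  "no_cycle tail head F \<longleftrightarrow> \<not> (\<exists>es vs. set es \<subseteq> F \<and> undirected_cycle tail head es vs)"

definition arborescence ::
  "'v set \<Rightarrow> 'e set \<Rightarrow> ('e \<Rightarrow> 'v) \<Rightarrow> ('e \<Rightarrow> 'v) \<Rightarrow> 'e set \<Rightarrow> bool" where
  "arborescence V E tail head A \<longleftrightarrow>
     A \<subseteq> E \<and> no_cycle tail head A \<and> (\<forall>v\<in>V. card (A \<inter> delta E head v) = 1)"

definition branching ::
  "'v set \<Rightarrow> 'e set \<Rightarrow> ('e \<Rightarrow> 'v) \<Rightarrow> ('e \<Rightarrow> 'v) \<Rightarrow> 'e set \<Rightarrow> bool" where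
  "branching V E tail head I \<longleftrightarrow>
     I \<subseteq> E \<and> no_cycle tail head I \<and> (\<forall>v\<in>V. card (I \<inter> delta E head v) \<le> 1)"

definition arb_edge :: "'e set \<Rightarrow> ('e \<Rightarrow> 'v) \<Rightarrow> 'e set \<Rightarrow> 'v \<Rightarrow> 'e" where
  "arb_edge E head A v = (THE e. e \<in> A \<inter> delta E head v)"

definition phi ::
  "'v set \<Rightarrow> 'e set \<Rightarrow> ('e \<Rightarrow> 'v) \<Rightarrow> ('v \<Rightarrow> 'e \<Rightarrow> 'e \<Rightarrow> bool) \<Rightarrow> 'e set \<Rightarrow> 'e set \<Rightarrow> nat" where
  "phi V E head pref A A' = card {v \<in> V. pref v (arb_edge E head A v) (arb_edge E head A' v)}"

definition popular ::
  "'v set \<Rightarrow> 'e set \<Rightarrow> ('e \<Rightarrow> 'v) \<Rightarrow> ('e \<Rightarrow> 'v) \<Rightarrow> ('v \<Rightarrow> 'e \<Rightarrow> 'e \<Rightarrow> bool) \<Rightarrow> 'e set \<Rightarrow> bool" where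
  "popular V E tail head pref A \<longleftrightarrow>
     arborescence V E tail head A \<and>
     (\<forall>A'. arborescence V E tail head A' \<longrightarrow> phi V E head pref A' A \<le> phi V E head pref A A')"

definition grank :: "('e \<Rightarrow> 'v) \<Rightarrow> ('e \<Rightarrow> 'v) \<Rightarrow> 'e set \<Rightarrow> nat" where
  "grank tail head S = Max (card ` {F. F \<subseteq> S \<and> no_cycle tail head F})"

definition gspan :: "'e set \<Rightarrow> ('e \<Rightarrow> 'v) \<Rightarrow> ('e \<Rightarrow> 'v) \<Rightarrow> 'e set \<Rightarrow> 'e set" where
  "gspan E tail head S = {e \<in> E. grank tail head (insert e S) = grank tail head S}"

text \<open>Multichains are lists Cs; C_i = Cs ! (i - 1) for 1 \<le> i \<le> length Cs, and C_0 = {}.\<close>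
definition cset :: "'e set list \<Rightarrow> nat \<Rightarrow> 'e set" where
  "cset Cs i = (if i = 0 then {} else Cs ! (i - 1))"

definition multichain :: "'e set list \<Rightarrow> bool" where
  "multichain Cs \<longleftrightarrow> (\<forall>i. Suc i < length Cs \<longrightarrow> Cs ! i \<subseteq> Cs ! Suc i)"

definition strict_chain :: "'e set list \<Rightarrow> bool" where
  "strict_chain Cs \<longleftrightarrow> (\<forall>i. Suc i < length Cs \<longrightarrow> Cs ! i \<subset> Cs ! Suc i)"

definition lev :: "'e set list \<Rightarrow> 'e \<Rightarrow> nat" where
  "lev Cs e = (THE i. 1 \<le> i \<and> i \<le> length Cs \<and> e \<in> cset Cs i - cset Cs (i - 1))"

definition levstar :: "'e set \<Rightarrow> ('e \<Rightarrow> 'v) \<Rightarrow> 'e set list \<Rightarrow> 'v \<Rightarrow> nat" where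
  "levstar E head Cs v = Max (lev Cs ` delta E head v)"

definition ECs ::
  "'v set \<Rightarrow> 'e set \<Rightarrow> ('e \<Rightarrow> 'v) \<Rightarrow> ('v \<Rightarrow> 'e \<Rightarrow> 'e \<Rightarrow> bool) \<Rightarrow> 'e set list \<Rightarrow> 'e set" where
  "ECs V E head pref Cs = {e \<in> E. head e \<in> V \<and>
     ((lev Cs e = levstar E head Cs (head e) \<and>
        \<not> (\<exists>e'\<in>delta E head (head e). lev Cs e' = lev Cs e \<and> pref (head e) e' e))
      \<or>
      (lev Cs e = levstar E head Cs (head e) - 1 \<and>
        \<not> (\<exists>e'\<in>delta E head (head e). lev Cs e' = lev Cs e \<and> pref (head e) e' e) \<and>
        (\<forall>f\<in>delta E head (head e). lev Cs f = levstar E head Cs (head e) \<longrightarrow> pref (head e) e f)))}"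

definition lex_less :: "nat list \<Rightarrow> nat list \<Rightarrow> bool" where
  "lex_less xs ys \<longleftrightarrow> (\<exists>k < length xs. take k xs = take k ys \<and> xs ! k < ys ! k)"

definition count_vec :: "'e set list \<Rightarrow> 'e set \<Rightarrow> nat list" where
  "count_vec Cs I = map (\<lambda>C. card (I \<inter> C)) Cs"

definition lexmax_branching ::
  "'v set \<Rightarrow> 'e set \<Rightarrow> ('e \<Rightarrow> 'v) \<Rightarrow> ('e \<Rightarrow> 'v) \<Rightarrow> ('v \<Rightarrow> 'e \<Rightarrow> 'e \<Rightarrow> bool) \<Rightarrow> 'e set list \<Rightarrow> 'e set \<Rightarrow> bool" where
  "lexmax_branching V E tail head pref Cs I \<longleftrightarrow>
     branching V E tail head I \<and> I \<subseteq> ECs V E head pref Cs \<and>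
     (\<forall>J. branching V E tail head J \<and> J \<subseteq> ECs V E head pref Cs \<longrightarrow>
          \<not> lex_less (count_vec Cs I) (count_vec Cs J))"

text \<open>One (non-returning) iteration of Algorithm 1 from multichain Cs to Cs'.\<close>
definition alg_step ::
  "'v set \<Rightarrow> 'e set \<Rightarrow> ('e \<Rightarrow> 'v) \<Rightarrow> ('e \<Rightarrow> 'v) \<Rightarrow> ('v \<Rightarrow> 'e \<Rightarrow> 'e \<Rightarrow> bool) \<Rightarrow> 'e set list \<Rightarrow> 'e set list \<Rightarrow> bool" where
  "alg_step V E tail head pref Cs Cs' \<longleftrightarrow>
     length Cs \<le> card V \<and>
     (\<exists>I k. lexmax_branching V E tail head pref Cs I \<and>
        1 \<le> k \<and> k \<le> length Cs \<and>
        card (I \<inter> cset Cs k) < grank tail head (cset Cs k) \<and>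
        (\<forall>i. 1 \<le> i \<and> i < k \<longrightarrow> card (I \<inter> cset Cs i) = grank tail head (cset Cs i)) \<and>
        Cs' = (let Cs1 = Cs[k - 1 := gspan E tail head (I \<inter> cset Cs k)]
               in if k = length Cs then Cs1 @ [E] else Cs1))"

inductive alg_reach ::
  "'v set \<Rightarrow> 'e set \<Rightarrow> ('e \<Rightarrow> 'v) \<Rightarrow> ('e \<Rightarrow> 'v) \<Rightarrow> ('v \<Rightarrow> 'e \<Rightarrow> 'e \<Rightarrow> bool) \<Rightarrow> 'e set list \<Rightarrow> bool"
  for V E tail head pref where
  init: "alg_reach V E tail head pref [E]"
| step: "alg_reach V E tail head pref Cs \<Longrightarrow> alg_step V E tail head pref Cs Cs' \<Longrightarrow> alg_reach V E tail head pref Cs'"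

end

theory Submission
  imports Defs
begin

text \<open>Every multichain produced by the algorithm is a multichain of closed sets ending in \<open>E\<close>
  whose length is at most \<open>q\<close> and whose \<open>i\<close>-th set contains \<open>D\<^sub>i\<close>. In an iteration with
  lexmax branching \<open>I\<close> and first deficient index \<open>k\<close>, the new set \<open>span(I \<inter> C\<^sub>k)\<close> contains
  \<open>C\<^bsub>k-1\<^esub>\<close> (where \<open>I\<close> has full rank) and lies in the closed set \<open>C\<^bsub>k+1\<^esub>\<close>, so the chain
  survives. The heart of the matter is \<open>D\<^sub>k \<subseteq> span(I \<inter> C\<^sub>k)\<close>. Otherwise, since
  \<open>A \<inter> D\<^sub>k\<close> spans \<open>D\<^sub>k\<close>, some \<open>a \<in> A \<inter> D\<^sub>k\<close> is unspanned, and \<open>a\<close> has level \<open>k\<close> in both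
  multichains, hence lies in \<open>E(C)\<close>. Adding \<open>a\<close> to \<open>I \<inter> C\<^sub>k\<close> would give a lexicographically
  better branching, unless an edge \<open>x\<close> of it already enters the head of \<open>a\<close>. In that case \<open>x\<close>
  also has equal levels in both multichains, and after swapping \<open>x\<close> for \<open>a\<close> some edge of
  \<open>A \<inter> D\<^bsub>lev x\<^esub>\<close> is unspanned, so the argument repeats with one more edge of \<open>A\<close>
  in the branching. When \<open>k = p\<close>, the same inclusion with \<open>D\<^sub>q = E\<close> forces \<open>p < q\<close>.\<close>

definition undirected_edges :: "('e \<Rightarrow> 'v) \<Rightarrow> ('e \<Rightarrow> 'v) \<Rightarrow> 'e set \<Rightarrow> ('v \<times> 'v) set" where
  "undirected_edges tail head F = {(x, y). \<exists>f\<in>F. {tail f, head f} = {x, y}}"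

definition uconnected :: "('e \<Rightarrow> 'v) \<Rightarrow> ('e \<Rightarrow> 'v) \<Rightarrow> 'e set \<Rightarrow> 'v \<Rightarrow> 'v \<Rightarrow> bool" where
  "uconnected tail head F x y \<longleftrightarrow> (x, y) \<in> (undirected_edges tail head F)\<^sup>*"

lemma uconnected_refl [simp]: "uconnected tail head F x x"
  by (simp add: uconnected_def)

lemma uconnected_trans:
  "uconnected tail head F x y \<Longrightarrow> uconnected tail head F y z \<Longrightarrow> uconnected tail head F x z"
  unfolding uconnected_def by (rule rtrancl_trans)

lemma uconnected_sym:
  assumes "uconnected tail head F x y"
  shows "uconnected tail head F y x"
proof -
  have "sym (undirected_edges tail head F)"
    unfolding undirected_edges_def sym_def by (auto simp: insert_commute)
  then show ?thesis
    using assms unfolding uconnected_def by (meson sym_rtrancl symD)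
qed

lemma uconnected_edge:
  "f \<in> F \<Longrightarrow> {tail f, head f} = {x, y} \<Longrightarrow> uconnected tail head F x y"
  unfolding uconnected_def undirected_edges_def by (rule r_into_rtrancl) blast

lemma uconnected_tail_head: "f \<in> F \<Longrightarrow> uconnected tail head F (tail f) (head f)"
  by (rule uconnected_edge) simp_all

lemma uconnected_if_edges_uconnected:
  assumes "\<And>s. s \<in> S \<Longrightarrow> uconnected tail head T (tail s) (head s)"
    and "uconnected tail head S x y"
  shows "uconnected tail head T x y"
proof -
  have "(x, y) \<in> (undirected_edges tail head S)\<^sup>*"
    using assms(2) by (simp add: uconnected_def)
  then show ?thesis
  proof (induction rule: rtrancl_induct)
    case (step y z)
    then obtain s where "s \<in> S" "{tail s, head s} = {y, z}"
      unfolding undirected_edges_def by blast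
    then have "uconnected tail head T y z"
      using assms(1) uconnected_sym by (metis doubleton_eq_iff)
    then show ?case using step.IH uconnected_trans by metis
  qed simp
qed

lemma uconnected_mono: "S \<subseteq> T \<Longrightarrow> uconnected tail head S x y \<Longrightarrow> uconnected tail head T x y"
  by (rule uconnected_if_edges_uconnected) (auto intro: uconnected_tail_head)

lemma uconnected_crossing_edge:
  "uconnected tail head S x y \<Longrightarrow> \<not> uconnected tail head T x y \<Longrightarrow>
   \<exists>s\<in>S. \<not> uconnected tail head T (tail s) (head s)"
  using uconnected_if_edges_uconnected by metis

lemma no_cycle_subset: "G \<subseteq> F \<Longrightarrow> no_cycle tail head F \<Longrightarrow> no_cycle tail head G"
  unfolding no_cycle_def by blast

lemma no_cycle_empty: "no_cycle tail head {}"
  unfolding no_cycle_def undirected_cycle_def by auto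

lemma cycle_endpoints_uconnected:
  assumes cycle: "undirected_cycle tail head es vs" and es: "set es \<subseteq> insert e F"
    and F: "no_cycle tail head F"
  shows "uconnected tail head F (tail e) (head e)"
proof -
  define m where "m = length es"
  have "distinct es"
    and ends: "\<And>i. i < m \<Longrightarrow> {tail (es ! i), head (es ! i)} = {vs ! i, vs ! ((i + 1) mod m)}"
    using cycle unfolding undirected_cycle_def m_def by auto
  have "e \<in> set es"
    using cycle es F unfolding no_cycle_def by blast
  then obtain i0 where i0: "i0 < m" "es ! i0 = e"
    unfolding m_def by (metis in_set_conv_nth)
  have in_F: "es ! i \<in> F" if "i < m" "i \<noteq> i0" for i
    using es i0 that \<open>distinct es\<close> nth_eq_iff_index_eq nth_mem unfolding m_def by fastforce
  \<comment> \<open>walking around the cycle from the far end of \<open>e\<close> uses every edge except \<open>e\<close>\<close>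
  have walk: "uconnected tail head F (vs ! ((i0 + 1) mod m)) (vs ! ((i0 + 1 + j) mod m))"
    if "j < m" for j
    using that
  proof (induction j)
    case (Suc j)
    define i where "i = (i0 + 1 + j) mod m"
    have "i < m" using i0 unfolding i_def by simp
    moreover have "i \<noteq> i0"
      using i0 Suc.prems unfolding i_def by (cases "i0 + 1 + j < m") (auto simp: le_mod_geq)
    moreover have "(i + 1) mod m = (i0 + 1 + Suc j) mod m"
      unfolding i_def by (simp add: mod_Suc_eq)
    ultimately have "uconnected tail head F (vs ! i) (vs ! ((i0 + 1 + Suc j) mod m))"
      using ends in_F uconnected_edge by metis
    then show ?case
      using Suc uconnected_trans unfolding i_def by (metis Suc_lessD)
  qed simp
  have "(i0 + 1 + (m - 1)) mod m = i0" using i0 by simp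
  then have "uconnected tail head F (vs ! ((i0 + 1) mod m)) (vs ! i0)"
    using walk[of "m - 1"] i0 by simp
  moreover have "{tail e, head e} = {vs ! i0, vs ! ((i0 + 1) mod m)}"
    using ends i0 by metis
  ultimately show ?thesis
    by (metis doubleton_eq_iff uconnected_sym)
qed

definition simple_upath :: "('e \<Rightarrow> 'v) \<Rightarrow> ('e \<Rightarrow> 'v) \<Rightarrow> 'e set \<Rightarrow> 'e list \<Rightarrow> 'v list \<Rightarrow> bool" where
  "simple_upath tail head F es vs \<longleftrightarrow>
     length vs = Suc (length es) \<and> distinct vs \<and> set es \<subseteq> F \<and>
     (\<forall>i<length es. {tail (es ! i), head (es ! i)} = {vs ! i, vs ! Suc i})"

lemma simple_upath_snoc_edge:
  assumes path: "simple_upath tail head F es vs" "hd vs = x" "last vs = y"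
    and f: "f \<in> F" "{tail f, head f} = {y, z}"
  shows "\<exists>es' vs'. simple_upath tail head F es' vs' \<and> hd vs' = x \<and> last vs' = z"
proof -
  have lengths: "length vs = Suc (length es)" and "distinct vs" "set es \<subseteq> F"
    and ends: "\<And>i. i < length es \<Longrightarrow> {tail (es ! i), head (es ! i)} = {vs ! i, vs ! Suc i}"
    using path(1) unfolding simple_upath_def by auto
  have "vs \<noteq> []" using lengths by auto
  show ?thesis
  proof (cases "z \<in> set vs")
    case True
    then obtain i where i: "i < length vs" "vs ! i = z" by (metis in_set_conv_nth)
    have "simple_upath tail head F (take i es) (take (Suc i) vs)"
      unfolding simple_upath_def using lengths \<open>distinct vs\<close> \<open>set es \<subseteq> F\<close> ends i
      by (auto simp: min_def dest: in_set_takeD)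
    moreover have "hd (take (Suc i) vs) = x"
      using path(2) \<open>vs \<noteq> []\<close> by simp
    moreover have "last (take (Suc i) vs) = z"
      using i by (simp add: take_Suc_conv_app_nth)
    ultimately show ?thesis by blast
  next
    case False
    have "vs ! length es = y"
      using path(3) lengths \<open>vs \<noteq> []\<close> by (simp add: last_conv_nth)
    then have "simple_upath tail head F (es @ [f]) (vs @ [z])"
      unfolding simple_upath_def using lengths \<open>distinct vs\<close> \<open>set es \<subseteq> F\<close> ends f False
      by (auto simp: nth_append less_Suc_eq)
    moreover have "hd (vs @ [z]) = x" using path(2) \<open>vs \<noteq> []\<close> by simp
    ultimately show ?thesis by force
  qed
qed

lemma simple_upath_if_uconnected:
  assumes "uconnected tail head F x y"
  obtains es vs where "simple_upath tail head F es vs" "hd vs = x" "last vs = y"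
proof -
  have "(x, y) \<in> (undirected_edges tail head F)\<^sup>*"
    using assms by (simp add: uconnected_def)
  then have "\<exists>es vs. simple_upath tail head F es vs \<and> hd vs = x \<and> last vs = y"
  proof (induction rule: rtrancl_induct)
    case base
    have "simple_upath tail head F [] [x]" by (simp add: simple_upath_def)
    then show ?case by force
  next
    case (step y z)
    then obtain es vs where "simple_upath tail head F es vs" "hd vs = x" "last vs = y"
      by blast
    moreover obtain f where "f \<in> F" "{tail f, head f} = {y, z}"
      using step.hyps(2) unfolding undirected_edges_def by blast
    ultimately show ?case by (rule simple_upath_snoc_edge)
  qed
  then show thesis using that by blast
qed

lemma simple_upath_distinct_edges:
  assumes "simple_upath tail head F es vs"
  shows "distinct es"
proof (subst distinct_conv_nth, intro allI impI notI)
  have lengths: "length vs = Suc (length es)" and "distinct vs"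
    and ends: "\<And>i. i < length es \<Longrightarrow> {tail (es ! i), head (es ! i)} = {vs ! i, vs ! Suc i}"
    using assms unfolding simple_upath_def by auto
  fix i j assume ij: "i < length es" "j < length es" "i \<noteq> j" "es ! i = es ! j"
  then have "{vs ! i, vs ! Suc i} = {vs ! j, vs ! Suc j}" using ends by metis
  then show False using ij \<open>distinct vs\<close> lengths
    by (auto simp: doubleton_eq_iff nth_eq_iff_index_eq)
qed

lemma uconnected_insert_cycle:
  assumes "uconnected tail head F (tail e) (head e)" "e \<notin> F"
  shows "\<not> no_cycle tail head (insert e F)"
proof -
  obtain es vs where path: "simple_upath tail head F es vs" "hd vs = head e" "last vs = tail e"
    using simple_upath_if_uconnected[OF uconnected_sym[OF assms(1)]] by blast
  have lengths: "length vs = Suc (length es)" and "distinct vs" "set es \<subseteq> F"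
    and ends: "\<And>i. i < length es \<Longrightarrow> {tail (es ! i), head (es ! i)} = {vs ! i, vs ! Suc i}"
    using path(1) unfolding simple_upath_def by auto
  have "vs \<noteq> []" using lengths by auto
  then have "vs ! length es = tail e" "vs ! 0 = head e"
    using path(2,3) lengths by (simp_all add: last_conv_nth hd_conv_nth)
  then have "{tail ((es @ [e]) ! i), head ((es @ [e]) ! i)} = {vs ! i, vs ! ((i + 1) mod Suc (length es))}"
    if "i < Suc (length es)" for i
    using that ends by (cases "i = length es") (auto simp: nth_append insert_commute)
  then have "undirected_cycle tail head (es @ [e]) vs"
    unfolding undirected_cycle_def
    using lengths \<open>distinct vs\<close> \<open>set es \<subseteq> F\<close> assms(2) simple_upath_distinct_edges[OF path(1)]
    by auto
  moreover have "set (es @ [e]) \<subseteq> insert e F" using \<open>set es \<subseteq> F\<close> by auto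
  ultimately show ?thesis unfolding no_cycle_def by blast
qed

lemma no_cycle_insert_iff:
  assumes "no_cycle tail head F" "e \<notin> F"
  shows "no_cycle tail head (insert e F) \<longleftrightarrow> \<not> uconnected tail head F (tail e) (head e)"
  using assms cycle_endpoints_uconnected uconnected_insert_cycle unfolding no_cycle_def by metis

lemma finite_forest_cards:
  "finite S \<Longrightarrow> finite (card ` {F. F \<subseteq> S \<and> no_cycle tail head F})"
  by (simp add: finite_subset[of _ "Pow S"])

lemma card_le_grank:
  "finite S \<Longrightarrow> F \<subseteq> S \<Longrightarrow> no_cycle tail head F \<Longrightarrow> card F \<le> grank tail head S"
  unfolding grank_def by (rule Max_ge[OF finite_forest_cards]) blast+

lemma grank_forest:
  "finite F \<Longrightarrow> no_cycle tail head F \<Longrightarrow> grank tail head F = card F"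
  unfolding grank_def by (rule Max_eqI[OF finite_forest_cards]) (auto intro: card_mono)

lemma grank_attained:
  assumes "finite S"
  obtains F where "F \<subseteq> S" "no_cycle tail head F" "card F = grank tail head S"
proof -
  have "{} \<in> {F. F \<subseteq> S \<and> no_cycle tail head F}"
    using no_cycle_empty by blast
  then have "grank tail head S \<in> card ` {F. F \<subseteq> S \<and> no_cycle tail head F}"
    unfolding grank_def using Max_in[OF finite_forest_cards[OF assms]] by blast
  then show thesis using that by force
qed

lemma gspan_iff_uconnected:
  assumes F: "finite F" "no_cycle tail head F" and "e \<in> E"
  shows "e \<in> gspan E tail head F \<longleftrightarrow> uconnected tail head F (tail e) (head e)"
proof (cases "e \<in> F")
  case True
  then show ?thesis using \<open>e \<in> E\<close> uconnected_tail_head by (simp add: gspan_def insert_absorb)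
next
  case False
  show ?thesis
  proof (cases "no_cycle tail head (insert e F)")
    case True
    then have "grank tail head (insert e F) = Suc (grank tail head F)"
      using F False by (simp add: grank_forest)
    then show ?thesis
      using True F False no_cycle_insert_iff[OF F(2) False] by (simp add: gspan_def)
  next
    case cycle: False
    have "card G \<le> card F" if "G \<subseteq> insert e F" "no_cycle tail head G" for G
    proof -
      have "G \<noteq> insert e F" using cycle that(2) by blast
      then have "card G < card (insert e F)"
        using that(1) F(1) by (simp add: psubset_card_mono psubsetI)
      then show ?thesis using False F(1) by simp
    qed
    then have "grank tail head (insert e F) \<le> grank tail head F"
      using grank_attained[of "insert e F" tail head] F by (metis finite_insert grank_forest)
    moreover have "grank tail head F \<le> grank tail head (insert e F)"
      using F by (metis card_le_grank finite_insert grank_forest subset_insertI)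
    ultimately show ?thesis
      using cycle no_cycle_insert_iff[OF F(2) False] \<open>e \<in> E\<close> by (simp add: gspan_def)
  qed
qed

lemma uconnected_if_card_eq_grank:
  assumes "finite S" "F \<subseteq> S" "no_cycle tail head F" "card F = grank tail head S" "e \<in> S"
  shows "uconnected tail head F (tail e) (head e)"
proof (rule ccontr)
  assume unconnected: "\<not> uconnected tail head F (tail e) (head e)"
  then have "e \<notin> F" using uconnected_tail_head by metis
  moreover have "finite F" using assms(1,2) finite_subset by blast
  moreover have "card (insert e F) \<le> grank tail head S"
    using assms unconnected \<open>e \<notin> F\<close> no_cycle_insert_iff by (metis card_le_grank insert_subset)
  ultimately show False using assms(4) by simp
qed

lemma card_forest_le_if_uconnected:
  assumes X: "finite X" "no_cycle tail head X"
  shows "finite F \<Longrightarrow> no_cycle tail head F \<Longrightarrow> \<forall>f\<in>F. uconnected tail head X (tail f) (head f) \<Longrightarrow>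
    card F \<le> card X"
proof (induction "card (F - X)" arbitrary: F rule: less_induct)
  case less
  show ?case
  proof (cases "F \<subseteq> X")
    case True
    then show ?thesis using card_mono X(1) by blast
  next
    case False
    then obtain f where f: "f \<in> F" "f \<notin> X" by blast
    define F0 where "F0 = F - {f}"
    have F0: "no_cycle tail head F0" "f \<notin> F0" "F = insert f F0"
      using no_cycle_subset[OF _ less.prems(2)] f(1) unfolding F0_def by blast+
    then have "\<not> uconnected tail head F0 (tail f) (head f)"
      using less.prems(2) no_cycle_insert_iff[OF F0(1,2)] by simp
    moreover have "uconnected tail head X (tail f) (head f)"
      using less.prems(3) f(1) by blast
    ultimately obtain x where x: "x \<in> X" "\<not> uconnected tail head F0 (tail x) (head x)"
      using uconnected_crossing_edge by metis
    then have "x \<notin> F0" using uconnected_tail_head by metis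
    define F' where "F' = insert x F0"
    have "card (F' - X) < card (F - X)"
    proof -
      have "F' - X = (F - X) - {f}" using x(1) unfolding F'_def F0_def by blast
      moreover have "f \<in> F - X" using f by blast
      ultimately show ?thesis using less.prems(1) by (metis card_Diff1_less finite_Diff)
    qed
    moreover have "finite F'" using less.prems(1) unfolding F'_def F0_def by simp
    moreover have "no_cycle tail head F'"
      using no_cycle_insert_iff[OF F0(1) \<open>x \<notin> F0\<close>] x(2) unfolding F'_def by simp
    moreover have "\<forall>f'\<in>F'. uconnected tail head X (tail f') (head f')"
      using less.prems(3) uconnected_tail_head[OF x(1)] unfolding F'_def F0_def by blast
    ultimately have "card F' \<le> card X" by (rule less.hyps)
    moreover have "card F' = card F"
      using F0 \<open>x \<notin> F0\<close> less.prems(1) unfolding F'_def by simp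
    ultimately show ?thesis by simp
  qed
qed

definition gclosed :: "'e set \<Rightarrow> ('e \<Rightarrow> 'v) \<Rightarrow> ('e \<Rightarrow> 'v) \<Rightarrow> 'e set \<Rightarrow> bool" where
  "gclosed E tail head S \<longleftrightarrow> S \<subseteq> E \<and> (\<forall>e\<in>E. uconnected tail head S (tail e) (head e) \<longrightarrow> e \<in> S)"

lemma gclosed_ground: "gclosed E tail head E"
  unfolding gclosed_def by blast

lemma gclosed_gspan:
  assumes "finite X" "no_cycle tail head X"
  shows "gclosed E tail head (gspan E tail head X)"
  unfolding gclosed_def
proof (intro conjI ballI impI)
  show "gspan E tail head X \<subseteq> E" unfolding gspan_def by blast
  fix e assume "e \<in> E" "uconnected tail head (gspan E tail head X) (tail e) (head e)"
  moreover have "uconnected tail head X (tail s) (head s)" if "s \<in> gspan E tail head X" for s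
  proof -
    have "s \<in> E" using that unfolding gspan_def by blast
    then show ?thesis using that gspan_iff_uconnected[OF assms] by blast
  qed
  ultimately have "uconnected tail head X (tail e) (head e)"
    using uconnected_if_edges_uconnected by metis
  then show "e \<in> gspan E tail head X" using gspan_iff_uconnected[OF assms \<open>e \<in> E\<close>] by simp
qed

lemma gspan_subset_if_gclosed:
  assumes "gclosed E tail head S" "X \<subseteq> S" "finite X" "no_cycle tail head X"
  shows "gspan E tail head X \<subseteq> S"
proof
  fix e assume e: "e \<in> gspan E tail head X"
  then have "e \<in> E" unfolding gspan_def by blast
  then have "uconnected tail head X (tail e) (head e)"
    using e gspan_iff_uconnected[OF assms(3,4)] by simp
  then have "uconnected tail head S (tail e) (head e)" by (rule uconnected_mono[OF assms(2)])
  then show "e \<in> S" using assms(1) \<open>e \<in> E\<close> unfolding gclosed_def by blast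
qed

definition multichain_to :: "'e set list \<Rightarrow> 'e set \<Rightarrow> bool" where
  "multichain_to L E \<longleftrightarrow> multichain L \<and> L \<noteq> [] \<and> last L = E"

lemma multichain_nth_mono:
  "multichain L \<Longrightarrow> i \<le> j \<Longrightarrow> j < length L \<Longrightarrow> L ! i \<subseteq> L ! j"
proof (induction j)
  case (Suc j)
  then have "L ! j \<subseteq> L ! Suc j" unfolding multichain_def by simp
  with Suc show ?case by (auto simp: le_Suc_eq)
qed simp

lemma cset_mono: "multichain L \<Longrightarrow> i \<le> j \<Longrightarrow> j \<le> length L \<Longrightarrow> cset L i \<subseteq> cset L j"
  unfolding cset_def using multichain_nth_mono[of L "i - 1" "j - 1"] by auto

lemma cset_length: "L \<noteq> [] \<Longrightarrow> cset L (length L) = last L"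
  unfolding cset_def by (simp add: last_conv_nth)

lemma cset_subset_top: "multichain_to L E \<Longrightarrow> i \<le> length L \<Longrightarrow> cset L i \<subseteq> E"
  unfolding multichain_to_def using cset_mono[of L i "length L"] cset_length[of L] by simp

lemma lev_eq_Least:
  assumes L: "multichain_to L E" and "e \<in> E"
  shows "lev L e = (LEAST i. e \<in> cset L i)"
proof -
  define m where "m = (LEAST i. e \<in> cset L i)"
  have "e \<in> cset L (length L)"
    using L \<open>e \<in> E\<close> cset_length[of L] by (simp add: multichain_to_def)
  then have m: "e \<in> cset L m" "m \<le> length L"
    unfolding m_def by (auto intro: LeastI Least_le)
  then have "1 \<le> m" unfolding cset_def by (cases "m = 0") auto
  have unique: "i = m" if i: "1 \<le> i \<and> i \<le> length L \<and> e \<in> cset L i - cset L (i - 1)" for i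
  proof -
    have "m \<le> i" using i unfolding m_def by (simp add: Least_le)
    moreover have "\<not> m \<le> i - 1"
    proof
      assume "m \<le> i - 1"
      then have "cset L m \<subseteq> cset L (i - 1)"
        using L i unfolding multichain_to_def by (intro cset_mono) auto
      then show False using i m by blast
    qed
    ultimately show ?thesis by simp
  qed
  have "e \<notin> cset L (m - 1)"
    using not_less_Least[of "m - 1" "\<lambda>i. e \<in> cset L i"] \<open>1 \<le> m\<close> unfolding m_def by simp
  then have "lev L e = m"
    unfolding lev_def using m \<open>1 \<le> m\<close> unique by (intro the_equality) blast+
  then show ?thesis unfolding m_def .
qed

lemma mem_cset_iff_lev_le:
  assumes "multichain_to L E" "e \<in> E" "i \<le> length L"
  shows "e \<in> cset L i \<longleftrightarrow> lev L e \<le> i"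
proof
  assume "e \<in> cset L i"
  then show "lev L e \<le> i" using lev_eq_Least[OF assms(1,2)] by (simp add: Least_le)
next
  have "e \<in> cset L (length L)"
    using assms(1,2) cset_length[of L] by (simp add: multichain_to_def)
  then have "e \<in> cset L (lev L e)"
    unfolding lev_eq_Least[OF assms(1,2)] by (rule LeastI)
  moreover assume "lev L e \<le> i"
  ultimately show "e \<in> cset L i"
    using assms(1,3) cset_mono[of L "lev L e" i] by (auto simp: multichain_to_def)
qed

lemma lev_pos: "multichain_to L E \<Longrightarrow> e \<in> E \<Longrightarrow> 1 \<le> lev L e"
  using mem_cset_iff_lev_le[of L E e 0] by (simp add: cset_def)

lemma lev_le_length: "multichain_to L E \<Longrightarrow> e \<in> E \<Longrightarrow> lev L e \<le> length L"
  using mem_cset_iff_lev_le[of L E e "length L"] cset_length[of L] by (simp add: multichain_to_def)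

lemma digraph_wf_finite: "digraph_wf V r E tail head pref \<Longrightarrow> finite E"
  unfolding digraph_wf_def by blast

lemma digraph_wf_head: "digraph_wf V r E tail head pref \<Longrightarrow> e \<in> E \<Longrightarrow> head e \<in> V"
  unfolding digraph_wf_def by blast

lemma digraph_wf_pref_asym:
  assumes "digraph_wf V r E tail head pref" "e \<in> E" "f \<in> E" "head f = head e"
    and "pref (head e) e f"
  shows "\<not> pref (head e) f e"
proof
  have "head e \<in> V" using assms(1,2) by (rule digraph_wf_head)
  moreover assume "pref (head e) f e"
  ultimately show False
    using assms unfolding digraph_wf_def by metis
qed

lemma lev_le_levstar: "finite E \<Longrightarrow> f \<in> E \<Longrightarrow> lev L f \<le> levstar E head L (head f)"
  unfolding levstar_def delta_def by (rule Max_ge) auto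

lemma levstar_attained:
  assumes "finite E" "g \<in> E"
  obtains f where "f \<in> E" "head f = head g" "lev L f = levstar E head L (head g)"
proof -
  have "levstar E head L (head g) \<in> lev L ` delta E head (head g)"
    unfolding levstar_def delta_def using assms by (intro Max_in) auto
  then obtain f where "f \<in> delta E head (head g)" "lev L f = levstar E head L (head g)"
    by (metis imageE)
  then show thesis using that unfolding delta_def by blast
qed

lemma ECs_lev_bound:
  assumes "finite E" "b \<in> ECs V E head pref L" "f \<in> E" "head f = head b"
  shows "lev L f \<le> lev L b + 1 \<and> (lev L f = lev L b + 1 \<longrightarrow> pref (head b) b f)"
proof -
  let ?s = "levstar E head L (head b)"
  have "b \<in> E" using assms(2) unfolding ECs_def by blast
  then have "lev L b \<le> ?s" "lev L f \<le> ?s"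
    using lev_le_levstar[OF assms(1)] assms(3,4) by metis+
  moreover have "f \<in> delta E head (head b)" using assms(3,4) unfolding delta_def by simp
  ultimately show ?thesis
    using assms(2) unfolding ECs_def by (cases "?s = lev L b") auto
qed

lemma ECs_lev_less_if_pref:
  assumes wf: "digraph_wf V r E tail head pref"
    and "b \<in> ECs V E head pref L" "f \<in> E" "head f = head b" "pref (head b) f b"
  shows "lev L f < lev L b"
proof -
  have "b \<in> E" using assms(2) unfolding ECs_def by blast
  have "f \<in> delta E head (head b)" using assms(3,4) unfolding delta_def by simp
  then have "lev L f \<noteq> lev L b" using assms(2,5) unfolding ECs_def by blast
  moreover have "\<not> pref (head b) b f"
    using digraph_wf_pref_asym[OF wf assms(3) \<open>b \<in> E\<close>] assms(4,5) by simp
  ultimately show ?thesis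
    using ECs_lev_bound[OF digraph_wf_finite[OF wf] assms(2-4)] by auto
qed

lemma ECs_lev_exchange:
  assumes wf: "digraph_wf V r E tail head pref"
    and x: "x \<in> ECs V E head pref C" and a: "a \<in> ECs V E head pref D" and "head x = head a"
  shows "lev D x + lev C a \<le> lev D a + lev C x"
proof -
  have "x \<in> E" "a \<in> E" using x a unfolding ECs_def by blast+
  note bound_C = ECs_lev_bound[OF digraph_wf_finite[OF wf] x \<open>a \<in> E\<close>]
  note bound_D = ECs_lev_bound[OF digraph_wf_finite[OF wf] a \<open>x \<in> E\<close>]
  consider "pref (head a) x a" | "pref (head a) a x" | "\<not> pref (head a) x a" "\<not> pref (head a) a x"
    by blast
  then show ?thesis
  proof cases
    case 1
    then show ?thesis
      using ECs_lev_less_if_pref[OF wf a \<open>x \<in> E\<close>] bound_C \<open>head x = head a\<close> by fastforce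
  next
    case 2
    then show ?thesis
      using ECs_lev_less_if_pref[OF wf x \<open>a \<in> E\<close>] bound_D \<open>head x = head a\<close> by fastforce
  next
    case 3
    then show ?thesis using bound_C bound_D \<open>head x = head a\<close> by auto
  qed
qed

lemma ECs_if_lev_eq:
  assumes wf: "digraph_wf V r E tail head pref"
    and a: "a \<in> ECs V E head pref D" and lev_eq: "lev C a = lev D a"
    and lev_le: "\<forall>e\<in>E. lev C e \<le> lev D e"
  shows "a \<in> ECs V E head pref C"
proof -
  have "finite E" using wf by (rule digraph_wf_finite)
  have "a \<in> E" "head a \<in> V" using a unfolding ECs_def by blast+
  let ?s = "levstar E head C (head a)"
  have lev_C_bound: "lev C f \<le> lev C a + 1 \<and> (lev C f = lev C a + 1 \<longrightarrow> pref (head a) a f)"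
    if "f \<in> E" "head f = head a" for f
    using ECs_lev_bound[OF \<open>finite E\<close> a that] lev_le that(1) lev_eq by fastforce
  obtain f where "f \<in> E" "head f = head a" "lev C f = ?s"
    using levstar_attained[OF \<open>finite E\<close> \<open>a \<in> E\<close>] by metis
  then have "?s \<le> lev C a + 1" using lev_C_bound by fastforce
  moreover have "lev C a \<le> ?s" using lev_le_levstar[OF \<open>finite E\<close> \<open>a \<in> E\<close>] .
  moreover have "\<not> pref (head a) e' a"
    if "e' \<in> delta E head (head a)" "lev C e' = lev C a" for e'
  proof
    assume "pref (head a) e' a"
    then have "lev D e' < lev D a"
      using ECs_lev_less_if_pref[OF wf a] that(1) unfolding delta_def by blast
    then show False using that lev_le lev_eq unfolding delta_def by fastforce
  qed
  ultimately show ?thesis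
    using \<open>a \<in> E\<close> \<open>head a \<in> V\<close> lev_C_bound unfolding ECs_def delta_def
    by (cases "?s = lev C a") auto
qed

lemma branching_subset:
  assumes "finite E" "branching V E tail head I" "J \<subseteq> I"
  shows "branching V E tail head J"
  unfolding branching_def
proof (intro conjI ballI)
  show "J \<subseteq> E" "no_cycle tail head J"
    using assms(2,3) no_cycle_subset unfolding branching_def by blast+
  fix v assume "v \<in> V"
  have "card (J \<inter> delta E head v) \<le> card (I \<inter> delta E head v)"
    using assms unfolding branching_def delta_def by (intro card_mono) auto
  then show "card (J \<inter> delta E head v) \<le> 1"
    using assms(2) \<open>v \<in> V\<close> unfolding branching_def by fastforce
qed

lemma branching_insert:
  assumes "branching V E tail head J" "a \<in> E" "J \<inter> delta E head (head a) = {}"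
    and "no_cycle tail head (insert a J)"
  shows "branching V E tail head (insert a J)"
  unfolding branching_def
proof (intro conjI ballI)
  show "insert a J \<subseteq> E" using assms(1,2) unfolding branching_def by blast
  show "no_cycle tail head (insert a J)" by fact
  fix v assume "v \<in> V"
  show "card (insert a J \<inter> delta E head v) \<le> 1"
  proof (cases "v = head a")
    case True
    then have "insert a J \<inter> delta E head v = {a}"
      using assms(2,3) unfolding delta_def by auto
    then show ?thesis by simp
  next
    case False
    then have "insert a J \<inter> delta E head v = J \<inter> delta E head v"
      unfolding delta_def by auto
    then show ?thesis using assms(1) \<open>v \<in> V\<close> unfolding branching_def by simp
  qed
qed

lemma branching_swap:
  assumes "finite E" "branching V E tail head J" "x \<in> J" "a \<in> E" "head x = head a" "head a \<in> V"
    and "no_cycle tail head (insert a (J - {x}))"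
  shows "branching V E tail head (insert a (J - {x}))"
proof (rule branching_insert)
  show "branching V E tail head (J - {x})"
    using assms(1,2) by (rule branching_subset) blast
  have "finite (J \<inter> delta E head (head a))"
    using assms(1) unfolding delta_def by simp
  moreover have "card (J \<inter> delta E head (head a)) \<le> Suc 0"
    using assms(2,6) unfolding branching_def by simp
  moreover have "x \<in> J \<inter> delta E head (head a)"
    using assms(2-5) unfolding branching_def delta_def by auto
  ultimately show "(J - {x}) \<inter> delta E head (head a) = {}"
    by (auto simp: card_le_Suc0_iff_eq)
qed (use assms in simp_all)

lemma card_Int_swap:
  assumes "finite J" "x \<in> J" "a \<notin> J"
  shows "card (insert a (J - {x}) \<inter> T) + (if x \<in> T then 1 else 0) =
    card (J \<inter> T) + (if a \<in> T then 1 else 0)"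
proof -
  have "(J - {x}) \<inter> T = J \<inter> T - {x}" by blast
  then have "card ((J - {x}) \<inter> T) + (if x \<in> T then 1 else 0) = card (J \<inter> T)"
    using assms(1,2) card_Suc_Diff1[of "J \<inter> T" x] by (cases "x \<in> T") simp_all
  then show ?thesis using assms by (auto simp: Int_insert_left)
qed

lemma arborescence_unique_in_edge:
  assumes "arborescence V E tail head A" "a \<in> A" "b \<in> A" "head a = head b" "head a \<in> V"
  shows "a = b"
proof -
  have "card (A \<inter> delta E head (head a)) = 1"
    using assms(1,5) unfolding arborescence_def by blast
  moreover have "a \<in> A \<inter> delta E head (head a)" "b \<in> A \<inter> delta E head (head a)"
    using assms(1-4) unfolding arborescence_def delta_def by auto
  ultimately show ?thesis by (metis card_1_singletonE singletonD)
qed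

lemma lex_less_count_vec:
  assumes "1 \<le> k" "k \<le> length Cs"
    and "\<forall>i. 1 \<le> i \<and> i < k \<longrightarrow> card (J \<inter> cset Cs i) = card (I \<inter> cset Cs i)"
    and "card (I \<inter> cset Cs k) < card (J \<inter> cset Cs k)"
  shows "lex_less (count_vec Cs I) (count_vec Cs J)"
  unfolding lex_less_def
proof (intro exI conjI)
  have nth: "count_vec Cs X ! i = card (X \<inter> cset Cs (Suc i))" if "i < length Cs" for X i
    using that unfolding count_vec_def cset_def by simp
  show "k - 1 < length (count_vec Cs I)" using assms(1,2) unfolding count_vec_def by simp
  show "take (k - 1) (count_vec Cs I) = take (k - 1) (count_vec Cs J)"
    using assms(2,3) nth by (intro nth_take_lemma) (auto simp: count_vec_def)
  show "count_vec Cs I ! (k - 1) < count_vec Cs J ! (k - 1)"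
    using assms(1,2,4) nth[of "k - 1"] by simp
qed

locale lexmax_iteration =
  fixes V :: "'v set" and r :: 'v and E :: "'e set"
    and tail head :: "'e \<Rightarrow> 'v" and pref :: "'v \<Rightarrow> 'e \<Rightarrow> 'e \<Rightarrow> bool"
    and A :: "'e set" and Ds Cs :: "'e set list" and I :: "'e set" and k :: nat
  assumes wf: "digraph_wf V r E tail head pref"
    and A_arborescence: "arborescence V E tail head A"
    and A_ECs: "A \<subseteq> ECs V E head pref Ds"
    and A_spans: "\<forall>i<length Ds. gspan E tail head (A \<inter> Ds ! i) = Ds ! i"
    and Ds_chain: "multichain_to Ds E"
    and Cs_chain: "multichain_to Cs E"
    and length_le: "length Cs \<le> length Ds"
    and Ds_subset_Cs: "\<forall>i<length Cs. Ds ! i \<subseteq> Cs ! i"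
    and I_lexmax: "lexmax_branching V E tail head pref Cs I"
    and k_pos: "1 \<le> k" and k_le: "k \<le> length Cs"
    and I_full_below: "\<forall>i. 1 \<le> i \<and> i < k \<longrightarrow> card (I \<inter> cset Cs i) = grank tail head (cset Cs i)"
begin

lemma finite_E: "finite E"
  using wf by (rule digraph_wf_finite)

lemma A_subset: "A \<subseteq> E" and A_no_cycle: "no_cycle tail head A"
  using A_arborescence unfolding arborescence_def by blast+

lemma finite_A: "finite A"
  using A_subset finite_E by (rule finite_subset)

lemma I_branching: "branching V E tail head I" and I_ECs: "I \<subseteq> ECs V E head pref Cs"
  using I_lexmax unfolding lexmax_branching_def by blast+

lemma finite_I: "finite I"
  using I_branching finite_E finite_subset unfolding branching_def by blast

lemma mem_Cs_iff: "e \<in> E \<Longrightarrow> i \<le> length Cs \<Longrightarrow> e \<in> cset Cs i \<longleftrightarrow> lev Cs e \<le> i"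
  using Cs_chain by (rule mem_cset_iff_lev_le)

lemma mem_Ds_iff: "e \<in> E \<Longrightarrow> i \<le> length Ds \<Longrightarrow> e \<in> cset Ds i \<longleftrightarrow> lev Ds e \<le> i"
  using Ds_chain by (rule mem_cset_iff_lev_le)

lemma lev_Cs_le_lev_Ds:
  assumes "e \<in> E"
  shows "lev Cs e \<le> lev Ds e"
proof (cases "lev Ds e \<le> length Cs")
  case True
  have "e \<in> cset Ds (lev Ds e)"
    using mem_Ds_iff[OF assms] lev_le_length[OF Ds_chain assms] by simp
  moreover have "lev Ds e - 1 < length Cs" "1 \<le> lev Ds e"
    using True lev_pos[OF Ds_chain assms] by simp_all
  ultimately have "e \<in> cset Cs (lev Ds e)"
    using Ds_subset_Cs unfolding cset_def by auto
  then show ?thesis using mem_Cs_iff[OF assms True] by simp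
next
  case False
  then show ?thesis using lev_le_length[OF Cs_chain assms] by simp
qed

lemma A_edge_unspanned:
  assumes "1 \<le> j" "j \<le> length Ds" "e \<in> cset Ds j" "\<not> uconnected tail head J (tail e) (head e)"
  obtains a where "a \<in> A" "a \<in> cset Ds j" "\<not> uconnected tail head J (tail a) (head a)"
proof -
  have "e \<in> gspan E tail head (A \<inter> cset Ds j)"
    using A_spans assms(1-3) unfolding cset_def by auto
  moreover have "e \<in> E" using cset_subset_top[OF Ds_chain assms(2)] assms(3) by blast
  moreover have "finite (A \<inter> cset Ds j)" "no_cycle tail head (A \<inter> cset Ds j)"
    using finite_A no_cycle_subset[OF _ A_no_cycle] by blast+
  ultimately have "uconnected tail head (A \<inter> cset Ds j) (tail e) (head e)"
    using gspan_iff_uconnected by metis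
  then show thesis
    using uconnected_crossing_edge[OF _ assms(4)] that by blast
qed

lemma uconnected_if_count_full:
  assumes "1 \<le> i" "i < k" "no_cycle tail head J"
    and "card (J \<inter> cset Cs i) = card (I \<inter> cset Cs i)" "e \<in> cset Cs i"
  shows "uconnected tail head J (tail e) (head e)"
proof -
  have "cset Cs i \<subseteq> E" using cset_subset_top[OF Cs_chain, of i] assms(2) k_le by simp
  then have "finite (cset Cs i)" using finite_E by (rule finite_subset)
  moreover have "no_cycle tail head (J \<inter> cset Cs i)"
    using no_cycle_subset[OF _ assms(3)] by blast
  moreover have "card (J \<inter> cset Cs i) = grank tail head (cset Cs i)"
    using assms(1,2,4) I_full_below by simp
  ultimately have "uconnected tail head (J \<inter> cset Cs i) (tail e) (head e)"
    using uconnected_if_card_eq_grank[OF _ _ _ _ assms(5)] by blast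
  then show ?thesis by (rule uconnected_mono[rotated]) blast
qed

lemma lev_eq_if_unspanned:
  assumes "a \<in> A" "1 \<le> j" "j \<le> k" "a \<in> cset Ds j" "no_cycle tail head J"
    and "\<forall>i. 1 \<le> i \<and> i < j \<longrightarrow> card (J \<inter> cset Cs i) = card (I \<inter> cset Cs i)"
    and "\<not> uconnected tail head J (tail a) (head a)"
  shows "lev Cs a = j" "lev Ds a = j"
proof -
  have "a \<in> E" using assms(1) A_subset by blast
  have "lev Ds a \<le> j" using mem_Ds_iff[OF \<open>a \<in> E\<close>] assms(3,4) k_le length_le by simp
  moreover have "\<not> lev Cs a < j"
  proof
    assume "lev Cs a < j"
    then have "a \<in> cset Cs (j - 1)" "1 \<le> j - 1"
      using mem_Cs_iff[OF \<open>a \<in> E\<close>, of "j - 1"] assms(3) k_le lev_pos[OF Cs_chain \<open>a \<in> E\<close>]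
      by simp_all
    moreover have "j - 1 < k" using assms(2,3) by simp
    ultimately show False
      using uconnected_if_count_full[of "j - 1" J a] assms(5-7) by simp
  qed
  ultimately show "lev Cs a = j" "lev Ds a = j"
    using lev_Cs_le_lev_Ds[OF \<open>a \<in> E\<close>] by simp_all
qed

lemma count_le_if_branching:
  assumes "branching V E tail head B" "B \<subseteq> ECs V E head pref Cs"
    and "\<forall>i. 1 \<le> i \<and> i < k \<longrightarrow> card (B \<inter> cset Cs i) = card (I \<inter> cset Cs i)"
  shows "card (B \<inter> cset Cs k) \<le> card (I \<inter> cset Cs k)"
proof (rule ccontr)
  assume "\<not> ?thesis"
  then have "lex_less (count_vec Cs I) (count_vec Cs B)"
    using lex_less_count_vec[OF k_pos k_le] assms(3) by simp
  then show False using I_lexmax assms(1,2) unfolding lexmax_branching_def by blast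
qed

text \<open>\<open>J\<close> has the counts \<open>|J \<inter> C\<^sub>i|\<close> of \<open>I\<close> up to level \<open>k\<close>, except that from level
  \<open>lev a\<close> on it lacks the one edge that adding \<open>a\<close> would supply.\<close>

definition exchange_config :: "'e set \<Rightarrow> 'e \<Rightarrow> bool" where
  "exchange_config J a \<longleftrightarrow>
     branching V E tail head J \<and> J \<subseteq> ECs V E head pref Cs \<and> J \<subseteq> cset Cs k \<and>
     a \<in> A \<and> lev Cs a = lev Ds a \<and> lev Cs a \<le> k \<and> \<not> uconnected tail head J (tail a) (head a) \<and>
     (\<forall>i. 1 \<le> i \<and> i \<le> k \<longrightarrow>
        card (J \<inter> cset Cs i) + (if lev Cs a \<le> i \<and> i < k then 1 else 0) = card (I \<inter> cset Cs i))"

lemma exchange_config_ECs: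
  assumes "exchange_config J a"
  shows "a \<in> ECs V E head pref Cs"
proof (rule ECs_if_lev_eq[OF wf])
  show "a \<in> ECs V E head pref Ds" "lev Cs a = lev Ds a"
    using assms A_ECs unfolding exchange_config_def by blast+
  show "\<forall>e\<in>E. lev Cs e \<le> lev Ds e" using lev_Cs_le_lev_Ds by blast
qed

lemma exchange_config_counts:
  assumes "exchange_config J a" "1 \<le> i" "i \<le> k"
  shows "card (J \<inter> cset Cs i) + (if lev Cs a \<le> i \<and> i < k then 1 else 0) = card (I \<inter> cset Cs i)"
  using assms unfolding exchange_config_def by blast

lemma exchange_config_insert:
  assumes "exchange_config J a"
  shows "a \<in> E" "a \<notin> J" "finite J" "no_cycle tail head (insert a J)"
proof -
  have J: "branching V E tail head J"
    and a: "a \<in> A" "\<not> uconnected tail head J (tail a) (head a)"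
    using assms unfolding exchange_config_def by blast+
  show "a \<in> E" using a(1) A_subset by blast
  show "a \<notin> J" using a(2) uconnected_tail_head[of a J tail head] by blast
  show "finite J" using J finite_E finite_subset unfolding branching_def by blast
  show "no_cycle tail head (insert a J)"
    using J \<open>a \<notin> J\<close> a(2) no_cycle_insert_iff[of tail head J a] unfolding branching_def by blast
qed

lemma exchange_config_in_edge:
  assumes cfg: "exchange_config J a"
  shows "J \<inter> delta E head (head a) \<noteq> {}"
proof
  assume no_in_edge: "J \<inter> delta E head (head a) = {}"
  note a = exchange_config_insert[OF cfg]
  have "branching V E tail head (insert a J)"
    using cfg a(1,4) no_in_edge unfolding exchange_config_def by (intro branching_insert) auto
  moreover have "insert a J \<subseteq> ECs V E head pref Cs"
    using cfg exchange_config_ECs[OF cfg] unfolding exchange_config_def by blast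
  moreover have count_insert:
    "card (insert a J \<inter> cset Cs i) = card (J \<inter> cset Cs i) + (if lev Cs a \<le> i then 1 else 0)"
    if "i \<le> length Cs" for i
    using mem_Cs_iff[OF a(1) that] a(2,3) by (simp add: Int_insert_left)
  moreover have "card (insert a J \<inter> cset Cs i) = card (I \<inter> cset Cs i)" if "1 \<le> i" "i < k" for i
    using count_insert[of i] exchange_config_counts[OF cfg, of i] that k_le by auto
  ultimately have "card (insert a J \<inter> cset Cs k) \<le> card (I \<inter> cset Cs k)"
    by (intro count_le_if_branching) auto
  moreover have "lev Cs a \<le> k" using cfg unfolding exchange_config_def by blast
  ultimately show False
    using count_insert[OF k_le] exchange_config_counts[OF cfg k_pos order_refl] by simp
qed

lemma rival_lev_eq:
  assumes "a \<in> A" "lev Cs a = lev Ds a" "x \<in> ECs V E head pref Cs" "head x = head a"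
  shows "lev Cs x = lev Ds x"
proof -
  have "x \<in> E" using assms(3) unfolding ECs_def by blast
  have "lev Ds x + lev Cs a \<le> lev Ds a + lev Cs x"
    using ECs_lev_exchange[OF wf assms(3)] assms(1,4) A_ECs by blast
  then show ?thesis using assms(2) lev_Cs_le_lev_Ds[OF \<open>x \<in> E\<close>] by simp
qed

lemma exchange_config_swap_branching:
  assumes cfg: "exchange_config J a" and x: "x \<in> J" "head x = head a"
  shows "branching V E tail head (insert a (J - {x}))"
    and "insert a (J - {x}) \<subseteq> ECs V E head pref Cs \<inter> cset Cs k"
    and "\<not> uconnected tail head (insert a (J - {x})) (tail x) (head x)"
proof -
  note a = exchange_config_insert[OF cfg]
  have J: "branching V E tail head J" "J \<subseteq> ECs V E head pref Cs" "J \<subseteq> cset Cs k"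
    using cfg unfolding exchange_config_def by blast+
  have forest: "no_cycle tail head (insert a (J - {x}))"
    using a(4) by (rule no_cycle_subset[rotated]) blast
  then show "branching V E tail head (insert a (J - {x}))"
    using finite_E J(1) x a(1) digraph_wf_head[OF wf a(1)] by (intro branching_swap) auto
  show "insert a (J - {x}) \<subseteq> ECs V E head pref Cs \<inter> cset Cs k"
    using J(2,3) exchange_config_ECs[OF cfg] mem_Cs_iff[OF a(1) k_le] cfg
    unfolding exchange_config_def by auto
  have "insert x (insert a (J - {x})) = insert a J" "x \<notin> insert a (J - {x})"
    using x(1) a(2) by auto
  then show "\<not> uconnected tail head (insert a (J - {x})) (tail x) (head x)"
    using forest a(4) no_cycle_insert_iff[of tail head "insert a (J - {x})" x] by simp
qed

lemma exchange_config_swap_counts: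
  assumes cfg: "exchange_config J a" and x: "x \<in> J" and i: "1 \<le> i" "i \<le> k"
  shows "card (insert a (J - {x}) \<inter> cset Cs i) + (if lev Cs x \<le> i \<and> i < k then 1 else 0) =
    card (I \<inter> cset Cs i)"
proof -
  note a = exchange_config_insert[OF cfg]
  have "x \<in> E" "x \<in> cset Cs k" "lev Cs a \<le> k"
    using cfg x unfolding exchange_config_def branching_def by blast+
  then have "lev Cs x \<le> k" using mem_Cs_iff k_le by blast
  have "card (insert a (J - {x}) \<inter> cset Cs i) + (if lev Cs x \<le> i then 1 else 0) =
    card (J \<inter> cset Cs i) + (if lev Cs a \<le> i then 1 else 0)"
    using card_Int_swap[OF a(3) x a(2), of "cset Cs i"] i k_le
      mem_Cs_iff[OF a(1), of i] mem_Cs_iff[OF \<open>x \<in> E\<close>, of i] by simp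
  then show ?thesis
    using exchange_config_counts[OF cfg i] i \<open>lev Cs x \<le> k\<close> \<open>lev Cs a \<le> k\<close>
    by (cases "i < k") auto
qed

lemma exchange_config_swap:
  assumes cfg: "exchange_config J a" and x: "x \<in> J" "head x = head a"
  obtains a' where "exchange_config (insert a (J - {x})) a'"
    and "card (insert a (J - {x}) \<inter> A) = Suc (card (J \<inter> A))"
proof -
  define J' where "J' = insert a (J - {x})"
  define j where "j = lev Cs x"
  note a = exchange_config_insert[OF cfg]
  note J' = exchange_config_swap_branching[OF cfg x, folded J'_def]
  note counts' = exchange_config_swap_counts[OF cfg x(1), folded J'_def j_def]
  have "x \<in> ECs V E head pref Cs" "x \<in> cset Cs k" "a \<in> A" "lev Cs a = lev Ds a"
    using cfg x(1) unfolding exchange_config_def by blast+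
  moreover have "x \<in> E" using \<open>x \<in> ECs V E head pref Cs\<close> unfolding ECs_def by blast
  ultimately have lev_x: "lev Ds x = j" "1 \<le> j" "j \<le> k"
    using rival_lev_eq[of a x] x(2) mem_Cs_iff[OF \<open>x \<in> E\<close> k_le] lev_pos[OF Cs_chain \<open>x \<in> E\<close>]
    unfolding j_def by simp_all
  obtain a' where a': "a' \<in> A" "a' \<in> cset Ds j" "\<not> uconnected tail head J' (tail a') (head a')"
  proof (rule A_edge_unspanned)
    show "1 \<le> j" "j \<le> length Ds" using lev_x k_le length_le by simp_all
    show "x \<in> cset Ds j" using mem_Ds_iff[OF \<open>x \<in> E\<close>] lev_x k_le length_le by simp
  qed (use J' in blast)
  have "\<forall>i. 1 \<le> i \<and> i < j \<longrightarrow> card (J' \<inter> cset Cs i) = card (I \<inter> cset Cs i)"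
    using counts' lev_x(3) by fastforce
  then have "lev Cs a' = j" "lev Ds a' = j"
    using lev_eq_if_unspanned[OF a'(1) lev_x(2,3) a'(2) _ _ a'(3)] J'(1)
    unfolding branching_def by auto
  then have "exchange_config J' a'"
    unfolding exchange_config_def using J' a' lev_x(3) counts' by auto
  moreover have "x \<notin> A"
    using arborescence_unique_in_edge[OF A_arborescence \<open>a \<in> A\<close>, of x] x a(2)
      digraph_wf_head[OF wf a(1)] by auto
  then have "J' \<inter> A = insert a (J \<inter> A)" using \<open>a \<in> A\<close> unfolding J'_def by blast
  then have "card (J' \<inter> A) = Suc (card (J \<inter> A))" using a(2,3) by simp
  ultimately show thesis using that unfolding J'_def by blast
qed

lemma no_exchange_config: "\<not> exchange_config J a"
proof (induction "card A - card (J \<inter> A)" arbitrary: J a rule: less_induct)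
  case less
  show ?case
  proof
    assume cfg: "exchange_config J a"
    then obtain x where "x \<in> J" "head x = head a"
      using exchange_config_in_edge unfolding delta_def by blast
    with cfg obtain a' where "exchange_config (insert a (J - {x})) a'"
      and card_gain: "card (insert a (J - {x}) \<inter> A) = Suc (card (J \<inter> A))"
      by (rule exchange_config_swap)
    moreover have "card (insert a (J - {x}) \<inter> A) \<le> card A"
      using finite_A by (simp add: card_mono)
    ultimately show False
      using less.hyps card_gain by (metis Suc_le_lessD diff_less_mono2 lessI)
  qed
qed

lemma finite_I_cset: "finite (I \<inter> cset Cs k)" and no_cycle_I_cset: "no_cycle tail head (I \<inter> cset Cs k)"
  using finite_I I_branching no_cycle_subset[of "I \<inter> cset Cs k" I] unfolding branching_def by auto

lemma Ds_subset_gspan: "cset Ds k \<subseteq> gspan E tail head (I \<inter> cset Cs k)"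
proof
  fix e assume e: "e \<in> cset Ds k"
  let ?X = "I \<inter> cset Cs k"
  have "e \<in> E" using e cset_subset_top[OF Ds_chain, of k] k_le length_le by auto
  show "e \<in> gspan E tail head ?X"
  proof (rule ccontr)
    assume "e \<notin> gspan E tail head ?X"
    then have "\<not> uconnected tail head ?X (tail e) (head e)"
      using gspan_iff_uconnected[OF finite_I_cset no_cycle_I_cset \<open>e \<in> E\<close>] by simp
    then obtain a where a: "a \<in> A" "a \<in> cset Ds k" "\<not> uconnected tail head ?X (tail a) (head a)"
      using A_edge_unspanned[OF k_pos _ e] k_le length_le by auto
    have below: "?X \<inter> cset Cs i = I \<inter> cset Cs i" if "i \<le> k" for i
      using cset_mono[of Cs i k] Cs_chain that k_le unfolding multichain_to_def by auto
    then have "lev Cs a = k" "lev Ds a = k"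
      using lev_eq_if_unspanned[OF a(1) k_pos order_refl a(2) no_cycle_I_cset _ a(3)] by auto
    moreover have "branching V E tail head ?X"
      using finite_E I_branching by (rule branching_subset) blast
    ultimately have "exchange_config ?X a"
      unfolding exchange_config_def using a I_ECs below by auto
    then show False using no_exchange_config by blast
  qed
qed

lemma length_less_if_last_deficient:
  assumes "k = length Cs" "card (I \<inter> cset Cs k) < grank tail head (cset Cs k)"
  shows "length Cs < length Ds"
proof (rule ccontr)
  assume "\<not> ?thesis"
  then have "cset Ds k = E"
    using assms(1) length_le Ds_chain cset_length[of Ds] unfolding multichain_to_def by simp
  have "cset Cs k \<subseteq> E" using cset_subset_top[OF Cs_chain k_le] .
  then obtain F where F: "F \<subseteq> cset Cs k" "no_cycle tail head F" "card F = grank tail head (cset Cs k)"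
    using grank_attained finite_E finite_subset by metis
  have "\<forall>f\<in>F. uconnected tail head (I \<inter> cset Cs k) (tail f) (head f)"
    using F(1) \<open>cset Cs k \<subseteq> E\<close> Ds_subset_gspan \<open>cset Ds k = E\<close>
      gspan_iff_uconnected[OF finite_I_cset no_cycle_I_cset] by blast
  moreover have "finite F" using F(1) \<open>cset Cs k \<subseteq> E\<close> finite_E by (meson finite_subset)
  ultimately have "card F \<le> card (I \<inter> cset Cs k)"
    using card_forest_le_if_uconnected[OF finite_I_cset no_cycle_I_cset] F(2) by blast
  then show False using F(3) assms(2) by simp
qed

lemma cset_pred_subset_gspan: "cset Cs (k - 1) \<subseteq> gspan E tail head (I \<inter> cset Cs k)"
proof
  fix e assume e: "e \<in> cset Cs (k - 1)"
  then have "1 \<le> k - 1" unfolding cset_def by (cases "k - 1 = 0") auto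
  moreover have "I \<inter> cset Cs k \<inter> cset Cs (k - 1) = I \<inter> cset Cs (k - 1)"
    using cset_mono[of Cs "k - 1" k] Cs_chain k_le unfolding multichain_to_def by auto
  ultimately have "uconnected tail head (I \<inter> cset Cs k) (tail e) (head e)"
    using uconnected_if_count_full[OF _ _ no_cycle_I_cset _ e] by simp
  moreover have "e \<in> E" using e cset_subset_top[OF Cs_chain, of "k - 1"] k_le by fastforce
  ultimately show "e \<in> gspan E tail head (I \<inter> cset Cs k)"
    using gspan_iff_uconnected[OF finite_I_cset no_cycle_I_cset] by blast
qed

end

definition alg_invariant :: "'e set \<Rightarrow> ('e \<Rightarrow> 'v) \<Rightarrow> ('e \<Rightarrow> 'v) \<Rightarrow> 'e set list \<Rightarrow> 'e set list \<Rightarrow> bool" where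
  "alg_invariant E tail head Ds Cs \<longleftrightarrow>
     multichain_to Cs E \<and> (\<forall>C\<in>set Cs. gclosed E tail head C) \<and>
     length Cs \<le> length Ds \<and> (\<forall>i<length Cs. Ds ! i \<subseteq> Cs ! i)"

lemma multichain_list_update:
  assumes "multichain L" "i < length L"
    and "0 < i \<Longrightarrow> L ! (i - 1) \<subseteq> N" "Suc i < length L \<Longrightarrow> N \<subseteq> L ! Suc i"
  shows "multichain (L[i := N])"
  unfolding multichain_def
proof (intro allI impI)
  fix j assume "Suc j < length (L[i := N])"
  then show "L[i := N] ! j \<subseteq> L[i := N] ! Suc j"
    using assms unfolding multichain_def by (cases "j = i"; cases "Suc j = i") auto
qed

lemma multichain_snoc:
  assumes "multichain L" "L \<noteq> [] \<Longrightarrow> last L \<subseteq> X"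
  shows "multichain (L @ [X])"
  unfolding multichain_def
proof (intro allI impI)
  fix j assume "Suc j < length (L @ [X])"
  then consider "Suc j < length L" | "Suc j = length L" by fastforce
  then show "(L @ [X]) ! j \<subseteq> (L @ [X]) ! Suc j"
  proof cases
    case 1
    then show ?thesis using assms(1) unfolding multichain_def by (simp add: nth_append)
  next
    case 2
    then have "L \<noteq> []" by auto
    moreover have "L ! j = last L" using 2[symmetric] \<open>L \<noteq> []\<close> by (simp add: last_conv_nth)
    ultimately show ?thesis using 2 assms(2) by (simp add: nth_append)
  qed
qed

lemma alg_invariant_init:
  assumes "multichain_to Ds E"
  shows "alg_invariant E tail head Ds [E]"
proof -
  have "1 \<le> length Ds" using assms unfolding multichain_to_def by (simp add: Suc_le_eq)
  then have "Ds ! 0 \<subseteq> E" using cset_subset_top[OF assms, of 1] by (simp add: cset_def)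
  then show ?thesis
    using \<open>1 \<le> length Ds\<close> gclosed_ground
    unfolding alg_invariant_def multichain_to_def multichain_def by auto
qed

lemma pointwise_subset_list_update:
  "\<forall>j<length Cs. Ds ! j \<subseteq> Cs ! j \<Longrightarrow> Ds ! i \<subseteq> N \<Longrightarrow> \<forall>j<length Cs. Ds ! j \<subseteq> Cs[i := N] ! j"
  by (cases "i < length Cs") (auto simp: nth_list_update list_update_beyond)

lemma alg_invariant_update:
  assumes inv: "alg_invariant E tail head Ds Cs" and i: "Suc i < length Cs"
    and N: "gclosed E tail head N" "Ds ! i \<subseteq> N" "0 < i \<Longrightarrow> Cs ! (i - 1) \<subseteq> N" "N \<subseteq> Cs ! Suc i"
  shows "alg_invariant E tail head Ds (Cs[i := N])"
proof -
  have "multichain (Cs[i := N])"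
    using inv i N unfolding alg_invariant_def multichain_to_def by (intro multichain_list_update) auto
  moreover have "last (Cs[i := N]) = last Cs"
    using i by (subst last_list_update) auto
  moreover have "set (Cs[i := N]) \<subseteq> insert N (set Cs)" by (rule set_update_subset_insert)
  ultimately show ?thesis
    using inv N(1) pointwise_subset_list_update[OF _ N(2)] unfolding alg_invariant_def multichain_to_def
    by auto
qed

lemma alg_invariant_update_last:
  assumes inv: "alg_invariant E tail head Ds Cs" and Ds: "multichain_to Ds E"
    and i: "Suc i = length Cs" and longer: "length Cs < length Ds"
    and N: "gclosed E tail head N" "Ds ! i \<subseteq> N" "0 < i \<Longrightarrow> Cs ! (i - 1) \<subseteq> N"
  shows "alg_invariant E tail head Ds (Cs[i := N] @ [E])"
  unfolding alg_invariant_def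
proof (intro conjI)
  let ?Cs' = "Cs[i := N] @ [E]"
  have "multichain (Cs[i := N])"
    using inv i N unfolding alg_invariant_def multichain_to_def by (intro multichain_list_update) auto
  moreover have "last (Cs[i := N]) = N"
    using i by (subst last_list_update) auto
  ultimately show "multichain_to ?Cs' E"
    using N(1) unfolding gclosed_def multichain_to_def by (auto intro: multichain_snoc)
  show "\<forall>C\<in>set ?Cs'. gclosed E tail head C"
    using inv N(1) gclosed_ground set_update_subset_insert[of Cs i N]
    unfolding alg_invariant_def by auto
  show "length ?Cs' \<le> length Ds" using longer by simp
  show "\<forall>j<length ?Cs'. Ds ! j \<subseteq> ?Cs' ! j"
  proof (intro allI impI)
    fix j assume "j < length ?Cs'"
    then consider "j < length Cs" | "j = length Cs" by fastforce
    then show "Ds ! j \<subseteq> ?Cs' ! j"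
    proof cases
      case 1
      then show ?thesis
        using inv pointwise_subset_list_update[OF _ N(2)] unfolding alg_invariant_def
        by (simp add: nth_append)
    next
      case 2
      then have "Ds ! j = cset Ds (Suc (length Cs))" unfolding cset_def by simp
      then show ?thesis
        using 2 cset_subset_top[OF Ds, of "Suc (length Cs)"] longer by (simp add: nth_append)
    qed
  qed
qed

lemma alg_invariant_step:
  assumes wf: "digraph_wf V r E tail head pref"
    and A: "arborescence V E tail head A" "A \<subseteq> ECs V E head pref Ds"
      "\<forall>i<length Ds. gspan E tail head (A \<inter> Ds ! i) = Ds ! i"
    and Ds: "multichain_to Ds E"
    and inv: "alg_invariant E tail head Ds Cs" and step: "alg_step V E tail head pref Cs Cs'"
  shows "alg_invariant E tail head Ds Cs'"
proof -
  obtain I k where lexmax: "lexmax_branching V E tail head pref Cs I"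
    and k: "1 \<le> k" "k \<le> length Cs"
    and deficient: "card (I \<inter> cset Cs k) < grank tail head (cset Cs k)"
    and full: "\<forall>i. 1 \<le> i \<and> i < k \<longrightarrow> card (I \<inter> cset Cs i) = grank tail head (cset Cs i)"
    and Cs': "Cs' = (let Cs1 = Cs[k - 1 := gspan E tail head (I \<inter> cset Cs k)]
                     in if k = length Cs then Cs1 @ [E] else Cs1)"
    using step unfolding alg_step_def by blast
  interpret lexmax_iteration V r E tail head pref A Ds Cs I k
    using wf A Ds inv lexmax k full unfolding alg_invariant_def by unfold_locales auto
  define N where "N = gspan E tail head (I \<inter> cset Cs k)"
  have N: "gclosed E tail head N" "Ds ! (k - 1) \<subseteq> N" "0 < k - 1 \<Longrightarrow> Cs ! (k - 1 - 1) \<subseteq> N"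
    using gclosed_gspan[OF finite_I_cset no_cycle_I_cset] Ds_subset_gspan cset_pred_subset_gspan k
    unfolding N_def cset_def by auto
  show ?thesis
  proof (cases "k = length Cs")
    case True
    then show ?thesis
      using alg_invariant_update_last[OF inv Ds _ length_less_if_last_deficient[OF True deficient] N]
        Cs' k unfolding N_def by simp
  next
    case False
    have "gclosed E tail head (Cs ! k)" using inv False k unfolding alg_invariant_def by simp
    moreover have "I \<inter> cset Cs k \<subseteq> Cs ! k"
      using Cs_chain False k multichain_nth_mono[of Cs "k - 1" k]
      unfolding cset_def multichain_to_def by auto
    ultimately have "N \<subseteq> Cs ! k"
      unfolding N_def using finite_I_cset no_cycle_I_cset by (rule gspan_subset_if_gclosed)
    then show ?thesis
      using alg_invariant_update[OF inv _ N] Cs' False k unfolding N_def by simp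
  qed
qed

theorem lemma3p1:
  fixes V :: "'v set" and r :: 'v and E :: "'e set"
    and tail head :: "'e \<Rightarrow> 'v" and pref :: "'v \<Rightarrow> 'e \<Rightarrow> 'e \<Rightarrow> bool"
    and A :: "'e set" and Ds Cs :: "'e set list"
  assumes "digraph_wf V r E tail head pref"
    and "popular V E tail head pref A"
    and "Ds \<noteq> []" and "Ds ! 0 \<noteq> {}" and "strict_chain Ds" and "last Ds = E"
    and "A \<subseteq> ECs V E head pref Ds"
    and "\<forall>i < length Ds. gspan E tail head (A \<inter> Ds ! i) = Ds ! i"
    and "alg_reach V E tail head pref Cs"
  shows "length Cs \<le> length Ds \<and> (\<forall>i < length Cs. Ds ! i \<subseteq> Cs ! i)"
proof -
  have Ds: "multichain_to Ds E"
    using assms(3,5,6) unfolding multichain_to_def strict_chain_def multichain_def by blast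
  have A: "arborescence V E tail head A"
    using assms(2) unfolding popular_def by simp
  have "alg_invariant E tail head Ds Cs"
    using assms(9)
  proof (induction rule: alg_reach.induct)
    case init
    show ?case using Ds by (rule alg_invariant_init)
  next
    case (step Cs Cs')
    then show ?case using alg_invariant_step[OF assms(1) A assms(7,8) Ds] by blast
  qed
  then show ?thesis unfolding alg_invariant_def by simp
qed

end
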